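(* Let $\kappa\ge 0$. Suppose $\bar{\mathbf x}\in\mathbf X$ satisfies $$\sum_{a\in\mathcal A}\sum_{w\in\mathcal W}\bar\lambda^w_a\, t_a(\bar{\mathbf v})\,(x^w_a-\bar x^w_a)\ \ge\ 0\qquad\text{for all }\mathbf x\in\mathbf X,$$ where $\bar v_a=\sum_{w\in\mathcal W}\bar x^w_a$, for some constants $\bar\lambda^w_a\in[\tfrac{1}{1+\kappa},1]$ ($w\in\mathcal W$, $a\in\mathcal A$). Then every path flow $\bar{\mathbf f}\in\mathbf F$ with $\bar x^w_a=\sum_{p\in\mathcal P_w}\delta^p_a\bar f_p$ for all $a\in\mathcal A$, $w\in\mathcal W$ is a $\kappa$-multiplicative satisficing user equilibrium ($\kappa$-MSatUE).
   Context: Let $G=(\mathcal N,\mathcal A)$ be a finite directed graph and $\mathcal W$ a finite set of origin–destination (OD) pairs; each $w\in\mathcal W$ has a demand $Q_w>0$ and a finite set $\mathcal P_w$ of paths from its origin to its destination; $\mathcal P=\bigcup_{w}\mathcal P_w$. Let $\delta^p_a=1$ if arc $a$ lies on path $p$ and $0$ otherwise. The feasible path flows are $\mathbf F=\{\mathbf f\ge 0:\sum_{p\in\mathcal P_w}f_p=Q_w\ \forall w\in\mathcal W\}$. A path flow $\mathbf f$ determines arc flows $v_a=\sum_{p\in\mathcal P}\delta^p_af_p$ (the set of these is $\mathbf V$) and OD-specific arc flows $x^w_a=\sum_{p\in\mathcal P_w}\delta^p_af_p$ (the set of these is $\mathbf X$); note $v_a=\sum_w x^w_a$. Each arc $a$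 has a travel time function $t_a(\mathbf v)$ of the arc-flow vector. The path travel time is $c_p(\mathbf f)=\sum_{a\in\mathcal A}\delta^p_a t_a(\mathbf v)$, where $\mathbf v$ is the arc flow induced by $\mathbf f$. For $\kappa\ge0$, a flow $\mathbf f\in\mathbf F$ is a $\kappa$-MSatUE if for every $w\in\mathcal W$ and $p\in\mathcal P_w$: $f_p>0\implies c_p(\mathbf f)\le(1+\kappa)\min_{p'\in\mathcal P_w}c_{p'}(\mathbf f)$. *)

theory Defs
  imports Complex_Main
begin

text \<open>Abstract network: arcs of type 'a (arc set A), OD pairs of type 'w (set W),
  paths of type 'p; P w is the path set of OD pair w; arcs_of p is the set of arcs on
  path p (so delta^p_a = 1 iff a \<in> arcs_of p). Q w is the demand.
  t a v is the travel time of arc a at arc-flow vector v :: 'a \<Rightarrow> real.\<close>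

definition delta :: "('p \<Rightarrow> 'a set) \<Rightarrow> 'p \<Rightarrow> 'a \<Rightarrow> real" where
  "delta arcs_of p a = (if a \<in> arcs_of p then 1 else 0)"

definition feasible_flows ::
  "'w set \<Rightarrow> ('w \<Rightarrow> 'p set) \<Rightarrow> ('w \<Rightarrow> real) \<Rightarrow> ('p \<Rightarrow> real) set" where
  "feasible_flows W P Q = {f. (\<forall>p\<in>(\<Union>w\<in>W. P w). f p \<ge> 0) \<and> (\<forall>w\<in>W. (\<Sum>p\<in>P w. f p) = Q w)}"

definition od_arc_flow ::
  "('w \<Rightarrow> 'p set) \<Rightarrow> ('p \<Rightarrow> 'a set) \<Rightarrow> ('p \<Rightarrow> real) \<Rightarrow> 'w \<Rightarrow> 'a \<Rightarrow> real" where
  "od_arc_flow P arcs_of f w a = (\<Sum>p\<in>P w. delta arcs_of p a * f p)"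

definition arc_flow ::
  "'w set \<Rightarrow> ('w \<Rightarrow> 'p set) \<Rightarrow> ('p \<Rightarrow> 'a set) \<Rightarrow> ('p \<Rightarrow> real) \<Rightarrow> 'a \<Rightarrow> real" where
  "arc_flow W P arcs_of f a = (\<Sum>p\<in>(\<Union>w\<in>W. P w). delta arcs_of p a * f p)"

definition od_flow_set ::
  "'w set \<Rightarrow> ('w \<Rightarrow> 'p set) \<Rightarrow> ('w \<Rightarrow> real) \<Rightarrow> ('p \<Rightarrow> 'a set) \<Rightarrow> ('w \<Rightarrow> 'a \<Rightarrow> real) set" where
  "od_flow_set W P Q arcs_of = {od_arc_flow P arcs_of f | f. f \<in> feasible_flows W P Q}"

definition path_cost ::
  "'a set \<Rightarrow> 'w set \<Rightarrow> ('w \<Rightarrow> 'p set) \<Rightarrow> ('p \<Rightarrow> 'a set) \<Rightarrow> ('a \<Rightarrow> ('a \<Rightarrow> real) \<Rightarrow> real)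
    \<Rightarrow> ('p \<Rightarrow> real) \<Rightarrow> 'p \<Rightarrow> real" where
  "path_cost A W P arcs_of t f p = (\<Sum>a\<in>A. delta arcs_of p a * t a (arc_flow W P arcs_of f))"

definition MSatUE ::
  "real \<Rightarrow> 'a set \<Rightarrow> 'w set \<Rightarrow> ('w \<Rightarrow> 'p set) \<Rightarrow> ('w \<Rightarrow> real) \<Rightarrow> ('p \<Rightarrow> 'a set)
    \<Rightarrow> ('a \<Rightarrow> ('a \<Rightarrow> real) \<Rightarrow> real) \<Rightarrow> ('p \<Rightarrow> real) \<Rightarrow> bool" where
  "MSatUE \<kappa> A W P Q arcs_of t f \<longleftrightarrow>
     f \<in> feasible_flows W P Q \<and>
     (\<forall>w\<in>W. \<forall>p\<in>P w. f p > 0 \<longrightarrow>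
        path_cost A W P arcs_of t f p \<le> (1 + \<kappa>) * (MIN p'\<in>P w. path_cost A W P arcs_of t f p'))"

end

theory Submission
  imports Defs
begin

text \<open>Moving the whole flow of a used path \<open>p\<close> onto another path \<open>q\<close> of the same OD pair
  keeps the flow feasible, and the variational inequality tested at this deviation says that
  the \<open>\<lambda>\<close>-weighted cost of \<open>p\<close> does not exceed that of \<open>q\<close>. Since the weights lie in
  \<open>[1/(1+\<kappa>), 1]\<close> and travel times are nonnegative, the true cost of \<open>p\<close> is at most
  \<open>1+\<kappa>\<close> times its weighted cost, and the weighted cost of \<open>q\<close> is at most its true cost.\<close>

lemma od_arc_flow_eq_0:
  assumes "\<And>p. p \<in> P w \<Longrightarrow> b \<notin> arcs_of p"
  shows "od_arc_flow P arcs_of f w b = 0"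
  using assms unfolding od_arc_flow_def delta_def by (auto intro: sum.neutral)

lemma arc_flow_eq_sum_od_arc_flow:
  assumes "finite W" and "\<And>w. w \<in> W \<Longrightarrow> finite (P w)"
    and "\<And>w w'. w \<in> W \<Longrightarrow> w' \<in> W \<Longrightarrow> w \<noteq> w' \<Longrightarrow> P w \<inter> P w' = {}"
  shows "arc_flow W P arcs_of f b = (\<Sum>w\<in>W. od_arc_flow P arcs_of f w b)"
  unfolding arc_flow_def od_arc_flow_def using assms by (intro sum.UNION_disjoint) auto

text \<open>Written additively so that the degenerate shift \<open>p = q\<close> is the identity.\<close>

definition shift_flow :: "('p \<Rightarrow> real) \<Rightarrow> 'p \<Rightarrow> 'p \<Rightarrow> 'p \<Rightarrow> real" where
  "shift_flow f p q r = f r + (if r = q then f p else 0) - (if r = p then f p else 0)"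

lemma shift_flow_other [simp]: "r \<noteq> p \<Longrightarrow> r \<noteq> q \<Longrightarrow> shift_flow f p q r = f r"
  unfolding shift_flow_def by simp

lemma shift_flow_nonneg: "0 \<le> f p \<Longrightarrow> 0 \<le> f r \<Longrightarrow> 0 \<le> shift_flow f p q r"
  unfolding shift_flow_def by auto

lemma sum_mult_shift_flow:
  assumes "finite S" and "p \<in> S" and "q \<in> S"
  shows "(\<Sum>r\<in>S. g r * shift_flow f p q r) = (\<Sum>r\<in>S. g r * f r) + (g q - g p) * f p"
  using assms
  by (simp add: shift_flow_def algebra_simps sum.distrib sum_subtractf if_distrib[of "(*) _"]
      sum.delta' cong: if_cong)

lemma sum_mult_shift_flow_other:
  "p \<notin> S \<Longrightarrow> q \<notin> S \<Longrightarrow> (\<Sum>r\<in>S. g r * shift_flow f p q r) = (\<Sum>r\<in>S. g r * f r)"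
  by (intro sum.cong refl) (metis shift_flow_other)

lemma shift_flow_feasible:
  assumes finP: "\<And>w. w \<in> W \<Longrightarrow> finite (P w)"
    and disjP: "\<And>w w'. w \<in> W \<Longrightarrow> w' \<in> W \<Longrightarrow> w \<noteq> w' \<Longrightarrow> P w \<inter> P w' = {}"
    and f: "f \<in> feasible_flows W P Q"
    and w0: "w0 \<in> W" and p: "p \<in> P w0" and q: "q \<in> P w0"
  shows "shift_flow f p q \<in> feasible_flows W P Q"
proof -
  have "(\<Sum>r\<in>P w. shift_flow f p q r) = (\<Sum>r\<in>P w. f r)" if w: "w \<in> W" for w
  proof (cases "w = w0")
    case True
    then show ?thesis using sum_mult_shift_flow[OF finP[OF w], of p q "\<lambda>_. 1"] p q by simp
  next
    case False
    then have "p \<notin> P w" "q \<notin> P w" using disjP[OF w w0] p q by blast+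
    then show ?thesis using sum_mult_shift_flow_other[of p "P w" q "\<lambda>_. 1"] by simp
  qed
  moreover have "0 \<le> f p" using f w0 p unfolding feasible_flows_def by blast
  ultimately show ?thesis using f unfolding feasible_flows_def by (auto intro: shift_flow_nonneg)
qed

lemma weighted_path_cost_le_of_VI:
  assumes finW: "finite W"
    and finP: "\<And>w. w \<in> W \<Longrightarrow> finite (P w)"
    and disjP: "\<And>w w'. w \<in> W \<Longrightarrow> w' \<in> W \<Longrightarrow> w \<noteq> w' \<Longrightarrow> P w \<inter> P w' = {}"
    and VI: "\<And>x. x \<in> od_flow_set W P Q arcs_of \<Longrightarrow>
        (\<Sum>a\<in>A. \<Sum>w\<in>W. lam w a * c a * (x w a - od_arc_flow P arcs_of f w a)) \<ge> 0"
    and f: "f \<in> feasible_flows W P Q"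
    and w0: "w0 \<in> W" and p: "p \<in> P w0" and q: "q \<in> P w0" and used: "f p > 0"
  shows "(\<Sum>a\<in>A. lam w0 a * (delta arcs_of p a * c a))
    \<le> (\<Sum>a\<in>A. lam w0 a * (delta arcs_of q a * c a))"
proof -
  let ?x = "od_arc_flow P arcs_of (shift_flow f p q)"
  have "?x \<in> od_flow_set W P Q arcs_of"
    unfolding od_flow_set_def using shift_flow_feasible[OF finP disjP f w0 p q] by blast
  have x_diff: "?x w a - od_arc_flow P arcs_of f w a
      = (if w = w0 then (delta arcs_of q a - delta arcs_of p a) * f p else 0)"
    if w: "w \<in> W" for w a
  proof (cases "w = w0")
    case True
    then show ?thesis unfolding od_arc_flow_def using sum_mult_shift_flow[OF finP[OF w]] p q by simp
  next
    case False
    then have "p \<notin> P w" "q \<notin> P w" using disjP[OF w w0] p q by blast+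
    then show ?thesis unfolding od_arc_flow_def using False sum_mult_shift_flow_other by simp
  qed
  have "0 \<le> (\<Sum>a\<in>A. \<Sum>w\<in>W. lam w a * c a * (?x w a - od_arc_flow P arcs_of f w a))"
    using VI[OF \<open>?x \<in> _\<close>] .
  also have "\<dots> = (\<Sum>a\<in>A. lam w0 a * c a * ((delta arcs_of q a - delta arcs_of p a) * f p))"
    using finW w0 by (simp add: x_diff if_distrib[of "(*) _"] sum.delta' cong: if_cong)
  also have "\<dots> = f p * ((\<Sum>a\<in>A. lam w0 a * (delta arcs_of q a * c a))
      - (\<Sum>a\<in>A. lam w0 a * (delta arcs_of p a * c a)))"
    by (simp add: sum_distrib_left sum_subtractf[symmetric] algebra_simps)
  finally show ?thesis using used by (simp add: zero_le_mult_iff)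
qed

lemma sum_weighted_le:
  fixes l g :: "'a \<Rightarrow> real"
  assumes "\<And>a. a \<in> A \<Longrightarrow> l a \<le> 1 \<and> 0 \<le> g a"
  shows "(\<Sum>a\<in>A. l a * g a) \<le> sum g A"
proof (rule sum_mono)
  fix a assume "a \<in> A"
  then show "l a * g a \<le> g a" using assms mult_right_mono[of "l a" 1 "g a"] by simp
qed

lemma sum_le_weighted:
  fixes \<kappa> :: real and l g :: "'a \<Rightarrow> real"
  assumes "\<kappa> \<ge> 0" and "\<And>a. a \<in> A \<Longrightarrow> 1 / (1 + \<kappa>) \<le> l a \<and> 0 \<le> g a"
  shows "sum g A \<le> (1 + \<kappa>) * (\<Sum>a\<in>A. l a * g a)"
proof -
  have "sum g A = (1 + \<kappa>) * (\<Sum>a\<in>A. 1 / (1 + \<kappa>) * g a)"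
    using assms(1) by (simp add: sum_divide_distrib[symmetric])
  also have "\<dots> \<le> (1 + \<kappa>) * (\<Sum>a\<in>A. l a * g a)"
    using assms by (intro mult_left_mono sum_mono mult_right_mono) auto
  finally show ?thesis .
qed

lemma od_flow_eq_od_arc_flow:
  assumes "x \<in> od_flow_set W P Q arcs_of" and "w \<in> W"
    and "\<And>p. p \<in> P w \<Longrightarrow> arcs_of p \<subseteq> A"
    and "\<And>a. a \<in> A \<Longrightarrow> x w a = od_arc_flow P arcs_of f w a"
  shows "x w = od_arc_flow P arcs_of f w"
proof
  obtain f0 where x: "x = od_arc_flow P arcs_of f0"
    using assms(1) unfolding od_flow_set_def by blast
  fix b show "x w b = od_arc_flow P arcs_of f w b"
  proof (cases "b \<in> A")
    case False
    then have "\<And>p. p \<in> P w \<Longrightarrow> b \<notin> arcs_of p" using assms(3) by blast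
    then show ?thesis unfolding x by (simp add: od_arc_flow_eq_0)
  qed (use assms(4) in simp)
qed

lemma MSatUE_if_pairwise_cost_le:
  assumes finP: "\<And>w. w \<in> W \<Longrightarrow> finite (P w)"
    and f: "f \<in> feasible_flows W P Q"
    and le: "\<And>w p q. w \<in> W \<Longrightarrow> p \<in> P w \<Longrightarrow> q \<in> P w \<Longrightarrow> f p > 0 \<Longrightarrow>
      path_cost A W P arcs_of t f p \<le> (1 + \<kappa>) * path_cost A W P arcs_of t f q"
  shows "MSatUE \<kappa> A W P Q arcs_of t f"
  unfolding MSatUE_def
proof (intro conjI ballI impI f)
  fix w p assume w: "w \<in> W" and p: "p \<in> P w" and used: "f p > 0"
  let ?cost = "path_cost A W P arcs_of t f"
  have "finite (?cost ` P w)" "?cost ` P w \<noteq> {}" using finP[OF w] p by auto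
  from Min_in[OF this] obtain q where "q \<in> P w" "(MIN p'\<in>P w. ?cost p') = ?cost q" by auto
  then show "?cost p \<le> (1 + \<kappa>) * (MIN p'\<in>P w. ?cost p')" using le[OF w p _ used] by simp
qed

theorem lemma1:
  fixes A :: "'a set" and W :: "'w set" and P :: "'w \<Rightarrow> 'p set"
    and Q :: "'w \<Rightarrow> real" and arcs_of :: "'p \<Rightarrow> 'a set"
    and t :: "'a \<Rightarrow> ('a \<Rightarrow> real) \<Rightarrow> real"
    and \<kappa> :: real and xbar :: "'w \<Rightarrow> 'a \<Rightarrow> real" and lambar :: "'w \<Rightarrow> 'a \<Rightarrow> real"
    and fbar :: "'p \<Rightarrow> real"
  assumes finA: "finite A" and finW: "finite W"
    and finP: "\<And>w. w \<in> W \<Longrightarrow> finite (P w)"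
    and disjP: "\<And>w w'. w \<in> W \<Longrightarrow> w' \<in> W \<Longrightarrow> w \<noteq> w' \<Longrightarrow> P w \<inter> P w' = {}"
    and arcs_in: "\<And>w p. w \<in> W \<Longrightarrow> p \<in> P w \<Longrightarrow> arcs_of p \<subseteq> A"
    and Qpos: "\<And>w. w \<in> W \<Longrightarrow> Q w > 0"
    and t_nonneg: "\<And>a v. a \<in> A \<Longrightarrow> t a v \<ge> 0"
    and kappa: "\<kappa> \<ge> 0"
    and lam: "\<And>w a. w \<in> W \<Longrightarrow> a \<in> A \<Longrightarrow> 1 / (1 + \<kappa>) \<le> lambar w a \<and> lambar w a \<le> 1"
    and xbar_in: "xbar \<in> od_flow_set W P Q arcs_of"
    and VI: "\<And>x. x \<in> od_flow_set W P Q arcs_of \<Longrightarrow>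
        (\<Sum>a\<in>A. \<Sum>w\<in>W. lambar w a * t a (\<lambda>b. \<Sum>w'\<in>W. xbar w' b) * (x w a - xbar w a)) \<ge> 0"
    and fbar_in: "fbar \<in> feasible_flows W P Q"
    and fbar_x: "\<And>a w. a \<in> A \<Longrightarrow> w \<in> W \<Longrightarrow> xbar w a = (\<Sum>p\<in>P w. delta arcs_of p a * fbar p)"
  shows "MSatUE \<kappa> A W P Q arcs_of t fbar"
proof -
  let ?cost = "path_cost A W P arcs_of t fbar"
  define c where "c a = t a (arc_flow W P arcs_of fbar)" for a
  have xbar_od: "xbar w = od_arc_flow P arcs_of fbar w" if "w \<in> W" for w
    by (rule od_flow_eq_od_arc_flow[OF xbar_in that])
      (use arcs_in[OF that] fbar_x[OF _ that] in \<open>simp_all add: od_arc_flow_def\<close>)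
  have "(\<lambda>b. \<Sum>w\<in>W. xbar w b) = arc_flow W P arcs_of fbar"
  proof
    fix b
    have "arc_flow W P arcs_of fbar b = (\<Sum>w\<in>W. od_arc_flow P arcs_of fbar w b)"
      using finW finP disjP by (rule arc_flow_eq_sum_od_arc_flow)
    then show "(\<Sum>w\<in>W. xbar w b) = arc_flow W P arcs_of fbar b" using xbar_od by simp
  qed
  then have VI_fbar: "(\<Sum>a\<in>A. \<Sum>w\<in>W. lambar w a * c a * (x w a - od_arc_flow P arcs_of fbar w a)) \<ge> 0"
    if "x \<in> od_flow_set W P Q arcs_of" for x
    using VI[OF that] xbar_od unfolding c_def by simp
  have cost_nonneg: "0 \<le> delta arcs_of p a * c a" if "a \<in> A" for p a
    using t_nonneg[OF that] unfolding c_def delta_def by simp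
  have "?cost p \<le> (1 + \<kappa>) * ?cost q"
    if w: "w \<in> W" and p: "p \<in> P w" and q: "q \<in> P w" and used: "fbar p > 0" for w p q
  proof -
    have "?cost p \<le> (1 + \<kappa>) * (\<Sum>a\<in>A. lambar w a * (delta arcs_of p a * c a))"
      unfolding path_cost_def c_def[symmetric] using lam[OF w] cost_nonneg kappa
      by (intro sum_le_weighted) auto
    also have "\<dots> \<le> (1 + \<kappa>) * (\<Sum>a\<in>A. lambar w a * (delta arcs_of q a * c a))"
      using weighted_path_cost_le_of_VI[OF finW finP disjP VI_fbar fbar_in w p q used] kappa
      by (intro mult_left_mono) auto
    also have "\<dots> \<le> (1 + \<kappa>) * ?cost q"
      unfolding path_cost_def c_def[symmetric] using lam[OF w] cost_nonneg kappa
      by (intro mult_left_mono sum_weighted_le) auto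
    finally show ?thesis .
  qed
  then show ?thesis using MSatUE_if_pairwise_cost_le[OF finP fbar_in] by blast
qed

end
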